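(* Let $V:\mathbb{R}^d\to\mathbb{R}^n$ be continuously differentiable and $h$-homogeneous, and assume there are constants $c,s,r,C>0$ with $c\Vert\theta\Vert^s\le\Vert V(\theta)\Vert_\mu\le C\Vert\theta\Vert^r$ for all $\theta$. Let $B=\frac{\Vert (I-\gamma P)V^*\Vert_\mu}{1-\gamma}=\frac{\Vert R\Vert_\mu}{1-\gamma}$. Then for any initial condition $\theta(0)=\theta_0$, if $\theta(t)$ follows the dynamics $$\dot\theta=-\nabla V(\theta)^T A\,(V(\theta)-V^* ),$$ we have $\limsup_{t\to\infty}\Vert V(\theta(t))\Vert_\mu\le C(B/c)^{r/s}$.
   Context: A Markov reward process has finite state space $\mathcal{S}$ with $|\mathcal{S}|=n$, transition matrix $P$ (entries $P(s'|s)$) defining an irreducible, aperiodic Markov chain with stationary distribution $\mu$, a finite reward function $r(s,s')$, and discount factor $\gamma\in[0,1)$. Let $R\in\mathbb{R}^n$ be $R(s)=\mathbb{E}_{s'\sim P(\cdot|s)}[r(s,s')]$, and let $V^*\in\mathbb{R}^n$ be the unique solution of $V^*=R+\gamma PV^*$. Let $D_\mu$ be the diagonal matrix with $\mu$ on the diagonal and $A:=D_\mu(I-\gamma P)$. For $x\in\mathbb{R}^n$, $\Vert x\Vert_\mu^2=x^TD_\mu x$; $\Vert\theta\Vert$ is the Euclidean norm. $\nabla V(\theta)$ is the $n\times d$ Jacobian of $V$. A differentiable function $f:\mathbb{R}^k\to\mathbb{R}^m$ is called $h$-homogeneous (for $h\in\mathbb{R}$) if $f(x)=h\,\nabla f(x)\,x$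 for all $x$. *)

theory Defs
  imports "HOL-Analysis.Analysis"
begin

text \<open>States are indexed by a finite type 'n; P$s$s' is the probability P(s'|s).\<close>

definition mat_pow :: "real^'n^'n \<Rightarrow> nat \<Rightarrow> real^'n^'n" where
  "mat_pow P k = ((\<lambda>M. M ** P) ^^ k) (mat 1)"

definition stochastic :: "real^'n^'n \<Rightarrow> bool" where
  "stochastic P \<longleftrightarrow> (\<forall>s s'. P$s$s' \<ge> 0) \<and> (\<forall>s. (\<Sum>s'\<in>UNIV. P$s$s') = 1)"

definition irreducible_chain :: "real^'n^'n \<Rightarrow> bool" where
  "irreducible_chain P \<longleftrightarrow> (\<forall>s s'. \<exists>k>0. mat_pow P k $ s $ s' > 0)"

definition aperiodic_chain :: "real^'n^'n \<Rightarrow> bool" where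
  "aperiodic_chain P \<longleftrightarrow> (\<forall>s. Gcd {k::nat. k > 0 \<and> mat_pow P k $ s $ s > 0} = 1)"

definition stationary_distribution :: "real^'n^'n \<Rightarrow> real^'n \<Rightarrow> bool" where
  "stationary_distribution P \<mu> \<longleftrightarrow> (\<forall>s. \<mu>$s \<ge> 0) \<and> (\<Sum>s\<in>UNIV. \<mu>$s) = 1 \<and> \<mu> v* P = \<mu>"

definition exp_reward :: "real^'n^'n \<Rightarrow> ('n \<Rightarrow> 'n \<Rightarrow> real) \<Rightarrow> real^'n" where
  "exp_reward P r = (\<chi> s. \<Sum>s'\<in>UNIV. P$s$s' * r s s')"

definition mu_norm :: "real^'n \<Rightarrow> real^'n \<Rightarrow> real" where
  "mu_norm \<mu> x = sqrt (\<Sum>s\<in>UNIV. \<mu>$s * (x$s)^2)"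

definition diag_mat :: "real^'n \<Rightarrow> real^'n^'n" where
  "diag_mat \<mu> = (\<chi> i j. if i = j then \<mu>$i else 0)"

definition A_mat :: "real^'n \<Rightarrow> real \<Rightarrow> real^'n^'n \<Rightarrow> real^'n^'n" where
  "A_mat \<mu> \<gamma> P = diag_mat \<mu> ** (mat 1 - \<gamma> *\<^sub>R P)"

definition homogeneous_with :: "real \<Rightarrow> (real^'d \<Rightarrow> real^'n) \<Rightarrow> (real^'d \<Rightarrow> real^'d^'n) \<Rightarrow> bool" where
  "homogeneous_with h f J \<longleftrightarrow> (\<forall>x. f x = h *\<^sub>R (J x *v x))"

end

theory Submission
  imports Defs
begin

text \<open>
  By Euler's relation \<open>\<nabla>V(\<theta>) \<theta> = V(\<theta>) / h\<close>, along the flow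
  \<open>d/dt \<parallel>\<theta>\<parallel>\<^sup>2 = -(2/h) \<langle>V(\<theta>), A (V(\<theta>) - V\<^sup>*)\<rangle>\<close>.
  Since \<open>P\<close> is a contraction for \<open>\<parallel>\<cdot>\<parallel>\<^sub>\<mu>\<close> (Jensen's inequality and stationarity of \<open>\<mu>\<close>),
  this inner product is at least \<open>(1 - \<gamma>) \<parallel>V(\<theta>)\<parallel>\<^sub>\<mu> (\<parallel>V(\<theta>)\<parallel>\<^sub>\<mu> - B)\<close>.
  By the lower bound \<open>c \<parallel>\<theta>\<parallel>\<^sup>s\<close>, the squared norm \<open>\<parallel>\<theta>\<parallel>\<^sup>2\<close> therefore decreases at a uniform
  rate whenever \<open>\<parallel>\<theta>\<parallel>\<close> exceeds a radius \<open>\<rho> > (B/c)\<^sup>1\<^sup>/\<^sup>s\<close>, so the trajectory eventually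
  stays in that ball, and the upper bound \<open>C \<parallel>\<theta>\<parallel>\<^sup>r\<close> transfers this to \<open>\<parallel>V(\<theta>)\<parallel>\<^sub>\<mu>\<close>.
  The degree \<open>h\<close> is not assumed positive: homogeneity integrates to \<open>V(t \<theta>) = t\<^sup>1\<^sup>/\<^sup>h V(\<theta>)\<close>,
  which is incompatible with the lower bound unless \<open>h > 0\<close>.
\<close>

lemma mu_norm_nonneg:
  assumes "\<And>i. \<mu>$i \<ge> 0"
  shows "mu_norm \<mu> x \<ge> 0"
  using assms by (simp add: mu_norm_def sum_nonneg)

lemma mu_norm_scaleR: "mu_norm \<mu> (a *\<^sub>R x) = \<bar>a\<bar> * mu_norm \<mu> x"
proof -
  have "(\<Sum>i\<in>UNIV. \<mu>$i * ((a *\<^sub>R x)$i)\<^sup>2) = a\<^sup>2 * (\<Sum>i\<in>UNIV. \<mu>$i * (x$i)\<^sup>2)"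
    by (simp add: sum_distrib_left power_mult_distrib mult_ac)
  then show ?thesis
    by (simp add: mu_norm_def real_sqrt_mult)
qed

lemma diag_mat_mult_vec_nth [simp]: "(diag_mat \<mu> *v x) $ i = \<mu>$i * x$i"
proof -
  have "(diag_mat \<mu> *v x) $ i = (\<Sum>j\<in>UNIV. (if i = j then \<mu>$i else 0) * x$j)"
    by (simp add: diag_mat_def matrix_vector_mult_def)
  also have "\<dots> = (\<Sum>j\<in>UNIV. if i = j then \<mu>$i * x$j else 0)"
    by (rule sum.cong) auto
  finally show ?thesis by simp
qed

lemma A_mat_mult_vec: "A_mat \<mu> \<gamma> P *v x = diag_mat \<mu> *v (x - \<gamma> *\<^sub>R (P *v x))"
  by (simp add: A_mat_def matrix_vector_mul_assoc[symmetric] matrix_vector_mult_diff_rdistrib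
      scaleR_matrix_vector_assoc)

lemma inner_diag_mat_self:
  assumes "\<And>i. \<mu>$i \<ge> 0"
  shows "x \<bullet> (diag_mat \<mu> *v x) = (mu_norm \<mu> x)\<^sup>2"
  using assms by (simp add: mu_norm_def inner_vec_def sum_nonneg power2_eq_square mult_ac)

lemma inner_diag_mat_le:
  fixes x y :: "real^'n"
  assumes "\<And>i. \<mu>$i \<ge> 0"
  shows "x \<bullet> (diag_mat \<mu> *v y) \<le> mu_norm \<mu> x * mu_norm \<mu> y"
proof -
  define sx sy :: "real^'n" where "sx = (\<chi> i. sqrt (\<mu>$i) * x$i)" and "sy = (\<chi> i. sqrt (\<mu>$i) * y$i)"
  have "x \<bullet> (diag_mat \<mu> *v y) = sx \<bullet> sy"
    using assms by (simp add: sx_def sy_def inner_vec_def mult_ac)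
  moreover have "norm sx = mu_norm \<mu> x" "norm sy = mu_norm \<mu> y"
    using assms by (simp_all add: sx_def sy_def norm_vec_def L2_set_def mu_norm_def power_mult_distrib)
  ultimately show ?thesis
    using norm_cauchy_schwarz[of sx sy] by simp
qed

lemma stochastic_mult_vec_nth_sq_le:
  assumes "stochastic P"
  shows "((P *v v)$i)\<^sup>2 \<le> (\<Sum>j\<in>UNIV. P$i$j * (v$j)\<^sup>2)"
proof -
  define m where "m = (P *v v)$i"
  have m: "m = (\<Sum>j\<in>UNIV. P$i$j * v$j)"
    by (simp add: m_def matrix_vector_mult_def)
  have row: "(\<Sum>j\<in>UNIV. P$i$j) = 1"
    using assms by (simp add: stochastic_def)
  \<comment> \<open>the variance of \<open>v\<close> under the distribution \<open>P(\<cdot>|i)\<close> is nonnegative\<close>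
  have "0 \<le> (\<Sum>j\<in>UNIV. P$i$j * (v$j - m)\<^sup>2)"
    using assms by (intro sum_nonneg) (simp add: stochastic_def)
  also have "\<dots> = (\<Sum>j\<in>UNIV. P$i$j * (v$j)\<^sup>2) - 2 * m * (\<Sum>j\<in>UNIV. P$i$j * v$j)
                  + m\<^sup>2 * (\<Sum>j\<in>UNIV. P$i$j)"
    by (simp add: power2_diff algebra_simps sum.distrib sum_subtractf sum_distrib_left sum_distrib_right)
  finally show ?thesis
    using m row by (simp add: m_def power2_eq_square)
qed

lemma mu_norm_stochastic_le:
  assumes P: "stochastic P" and \<mu>: "stationary_distribution P \<mu>"
  shows "mu_norm \<mu> (P *v v) \<le> mu_norm \<mu> v"
proof -
  have \<mu>_nonneg: "\<And>i. \<mu>$i \<ge> 0" and \<mu>_invariant: "\<mu> v* P = \<mu>"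
    using \<mu> by (simp_all add: stationary_distribution_def)
  have "(\<Sum>i\<in>UNIV. \<mu>$i * ((P *v v)$i)\<^sup>2) \<le> (\<Sum>i\<in>UNIV. \<mu>$i * (\<Sum>j\<in>UNIV. P$i$j * (v$j)\<^sup>2))"
    by (intro sum_mono mult_left_mono stochastic_mult_vec_nth_sq_le P \<mu>_nonneg)
  also have "\<dots> = (\<Sum>j\<in>UNIV. (\<mu> v* P)$j * (v$j)\<^sup>2)"
    unfolding vector_matrix_mult_def sum_distrib_left sum_distrib_right
    by (subst sum.swap) (simp add: sum_distrib_left sum_distrib_right mult_ac)
  also have "\<dots> = (\<Sum>j\<in>UNIV. \<mu>$j * (v$j)\<^sup>2)"
    by (simp add: \<mu>_invariant)
  finally show ?thesis
    by (simp add: mu_norm_def)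
qed

lemma inner_A_mat_ge:
  assumes P: "stochastic P" and \<mu>: "stationary_distribution P \<mu>" and "0 \<le> \<gamma>"
    and Vstar: "Vstar = R + \<gamma> *\<^sub>R (P *v Vstar)"
  shows "(1 - \<gamma>) * (mu_norm \<mu> x)\<^sup>2 - mu_norm \<mu> x * mu_norm \<mu> R
           \<le> x \<bullet> (A_mat \<mu> \<gamma> P *v (x - Vstar))"
proof -
  have \<mu>_nonneg: "\<And>i. \<mu>$i \<ge> 0"
    using \<mu> by (simp add: stationary_distribution_def)
  have R: "R = Vstar - \<gamma> *\<^sub>R (P *v Vstar)"
    using Vstar by (metis add_diff_cancel_right')
  have "A_mat \<mu> \<gamma> P *v (x - Vstar) = diag_mat \<mu> *v x - \<gamma> *\<^sub>R (diag_mat \<mu> *v (P *v x)) - diag_mat \<mu> *v R"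
    unfolding R A_mat_mult_vec
    by (simp add: matrix_vector_mult_diff_distrib matrix_vector_mult_scaleR
        scaleR_diff_right)
  then have "x \<bullet> (A_mat \<mu> \<gamma> P *v (x - Vstar))
      = x \<bullet> (diag_mat \<mu> *v x) - \<gamma> * (x \<bullet> (diag_mat \<mu> *v (P *v x))) - x \<bullet> (diag_mat \<mu> *v R)"
    by (simp add: inner_diff_right)
  moreover have "\<gamma> * (x \<bullet> (diag_mat \<mu> *v (P *v x))) \<le> \<gamma> * (mu_norm \<mu> x)\<^sup>2"
  proof (rule mult_left_mono[OF _ \<open>0 \<le> \<gamma>\<close>])
    have "x \<bullet> (diag_mat \<mu> *v (P *v x)) \<le> mu_norm \<mu> x * mu_norm \<mu> (P *v x)"
      by (rule inner_diag_mat_le[OF \<mu>_nonneg])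
    also have "\<dots> \<le> mu_norm \<mu> x * mu_norm \<mu> x"
      by (intro mult_left_mono mu_norm_stochastic_le P \<mu> mu_norm_nonneg \<mu>_nonneg)
    finally show "x \<bullet> (diag_mat \<mu> *v (P *v x)) \<le> (mu_norm \<mu> x)\<^sup>2"
      by (simp add: power2_eq_square)
  qed
  ultimately show ?thesis
    using inner_diag_mat_self[OF \<mu>_nonneg, of x] inner_diag_mat_le[OF \<mu>_nonneg, of x R]
    by (simp add: left_diff_distrib)
qed

lemma homogeneous_ray_has_vector_derivative:
  fixes V :: "real^'d \<Rightarrow> real^'n"
  assumes V_deriv: "\<And>x. (V has_derivative (\<lambda>v. J x *v v)) (at x)"
    and hom: "homogeneous_with h V J" and "h \<noteq> 0" "t \<noteq> 0"
  shows "((\<lambda>t. V (t *\<^sub>R x)) has_vector_derivative (1 / (h * t)) *\<^sub>R V (t *\<^sub>R x)) (at t)"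
proof -
  have "((\<lambda>t. V (t *\<^sub>R x)) has_derivative (\<lambda>u. J (t *\<^sub>R x) *v (u *\<^sub>R x))) (at t)"
    by (rule has_derivative_compose[OF _ V_deriv]) (auto intro!: derivative_eq_intros)
  moreover have "V (t *\<^sub>R x) = (h * t) *\<^sub>R (J (t *\<^sub>R x) *v x)"
    using hom by (simp add: homogeneous_with_def matrix_vector_mult_scaleR)
  ultimately show ?thesis
    using assms(3,4) by (simp add: has_vector_derivative_def matrix_vector_mult_scaleR)
qed

lemma homogeneous_with_scaleR:
  fixes V :: "real^'d \<Rightarrow> real^'n"
  assumes V_deriv: "\<And>x. (V has_derivative (\<lambda>v. J x *v v)) (at x)"
    and hom: "homogeneous_with h V J" and "h \<noteq> 0" "t > 0"
  shows "V (t *\<^sub>R x) = t powr (1 / h) *\<^sub>R V x"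
proof -
  have "((\<lambda>\<tau>. \<tau> powr (- 1 / h) *\<^sub>R V (\<tau> *\<^sub>R x)) has_vector_derivative 0) (at \<tau> within {0<..})"
    if "\<tau> \<in> {0<..}" for \<tau>
  proof -
    have pos: "\<tau> > 0"
      using that by simp
    have "\<tau> powr (- 1 / h - 1) = \<tau> powr (- 1 / h) / \<tau>"
      using pos by (simp add: powr_diff)
    then have "\<tau> powr (- 1 / h) *\<^sub>R ((1 / (h * \<tau>)) *\<^sub>R V (\<tau> *\<^sub>R x))
               + (- 1 / h * \<tau> powr (- 1 / h - 1)) *\<^sub>R V (\<tau> *\<^sub>R x) = 0"
      by (simp add: field_simps)
    moreover have "((\<lambda>\<tau>. \<tau> powr (- 1 / h) *\<^sub>R V (\<tau> *\<^sub>R x)) has_vector_derivative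
        \<tau> powr (- 1 / h) *\<^sub>R ((1 / (h * \<tau>)) *\<^sub>R V (\<tau> *\<^sub>R x))
          + (- 1 / h * \<tau> powr (- 1 / h - 1)) *\<^sub>R V (\<tau> *\<^sub>R x)) (at \<tau>)"
      using pos by (intro has_vector_derivative_scaleR has_real_derivative_powr
          homogeneous_ray_has_vector_derivative[OF V_deriv hom \<open>h \<noteq> 0\<close>]) auto
    ultimately show ?thesis
      by (metis has_vector_derivative_at_within)
  qed
  then obtain k where k: "\<And>\<tau>. \<tau> > 0 \<Longrightarrow> \<tau> powr (- 1 / h) *\<^sub>R V (\<tau> *\<^sub>R x) = k"
    by (rule has_vector_derivative_zero_constant[OF convex_real_interval(3)]) auto
  have "V (t *\<^sub>R x) = t powr (1 / h) *\<^sub>R (t powr (- 1 / h) *\<^sub>R V (t *\<^sub>R x))"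
    using \<open>t > 0\<close> by (simp add: powr_minus_divide)
  also have "\<dots> = t powr (1 / h) *\<^sub>R V x"
    using k[OF \<open>t > 0\<close>] k[of 1] by simp
  finally show ?thesis .
qed

lemma homogeneous_degree_pos:
  fixes V :: "real^'d \<Rightarrow> real^'n"
  assumes V_deriv: "\<And>x. (V has_derivative (\<lambda>v. J x *v v)) (at x)"
    and hom: "homogeneous_with h V J" and "c > 0" "s > 0"
    and lower: "\<And>x. c * norm x powr s \<le> mu_norm \<mu> (V x)"
  shows "h > 0"
proof (rule ccontr)
  assume "\<not> h > 0"
  obtain x :: "real^'d" where x: "norm x = 1"
    using vector_choose_size zero_le_one by blast
  define M where "M = mu_norm \<mu> (V x)"
  have "c \<le> M"
    using lower[of x] x by (simp add: M_def)
  have "h \<noteq> 0"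
  proof
    assume "h = 0"
    then have "M = 0"
      using hom by (simp add: homogeneous_with_def M_def mu_norm_def)
    with \<open>c \<le> M\<close> \<open>c > 0\<close> show False by simp
  qed
  with \<open>\<not> h > 0\<close> have "1 / h \<le> 0"
    by simp
  define T where "T = (M / c + 1) powr (1 / s)"
  have "T \<ge> 1"
    using \<open>c > 0\<close> \<open>s > 0\<close> \<open>c \<le> M\<close> by (simp add: T_def ge_one_powr_ge_zero)
  have "c * (M / c + 1) = c * norm (T *\<^sub>R x) powr s"
    using \<open>s > 0\<close> \<open>c > 0\<close> \<open>c \<le> M\<close> \<open>T \<ge> 1\<close> x by (simp add: T_def powr_powr)
  also have "\<dots> \<le> mu_norm \<mu> (V (T *\<^sub>R x))"
    by (rule lower)
  also have "\<dots> = T powr (1 / h) * M"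
    using \<open>T \<ge> 1\<close> \<open>c \<le> M\<close> \<open>c > 0\<close>
    by (simp add: homogeneous_with_scaleR[OF V_deriv hom \<open>h \<noteq> 0\<close>] mu_norm_scaleR M_def)
  also have "\<dots> \<le> 1 powr (1 / h) * M"
    using \<open>T \<ge> 1\<close> \<open>1 / h \<le> 0\<close> \<open>c \<le> M\<close> \<open>c > 0\<close> by (intro mult_right_mono powr_mono2') auto
  finally show False
    using \<open>c > 0\<close> by (simp add: distrib_left)
qed

lemma deriv_le_neg_reaches_sublevel:
  fixes L L' :: "real \<Rightarrow> real"
  assumes deriv: "\<And>t. t > t\<^sub>0 \<Longrightarrow> (L has_real_derivative L' t) (at t)"
    and below: "\<And>t. t > t\<^sub>0 \<Longrightarrow> b \<le> L t"
    and decay: "\<And>t. t > t\<^sub>0 \<Longrightarrow> a < L t \<Longrightarrow> L' t \<le> - \<delta>" and "\<delta> > 0"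
  obtains T where "T > t\<^sub>0" "L T \<le> a"
proof (rule ccontr)
  assume "\<not> thesis"
  with that have above: "\<And>t. t > t\<^sub>0 \<Longrightarrow> a < L t"
    by force
  define t1 t2 where "t1 = t\<^sub>0 + 1" and "t2 = t1 + (L t1 - b) / \<delta> + 1"
  have "(L t1 - b) / \<delta> \<ge> 0"
    using below[of t1] \<open>\<delta> > 0\<close> by (simp add: t1_def)
  then have "t1 < t2"
    by (simp add: t2_def)
  then obtain z where z: "t1 < z" "z < t2" "L t2 - L t1 = (t2 - t1) * L' z"
    using MVT2[of t1 t2 L L'] deriv by (fastforce simp: t1_def)
  have "(t2 - t1) * L' z \<le> (t2 - t1) * - \<delta>"
    using decay[OF _ above] z \<open>t1 < t2\<close> by (intro mult_left_mono) (auto simp: t1_def)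
  also have "\<dots> = - (L t1 - b) - \<delta>"
    using \<open>\<delta> > 0\<close> by (simp add: t2_def field_simps)
  finally have "L t2 < b"
    using z(3) \<open>\<delta> > 0\<close> by linarith
  with below[of t2] \<open>t1 < t2\<close> show False
    by (simp add: t1_def)
qed

lemma deriv_neg_sublevel_invariant:
  fixes L L' :: "real \<Rightarrow> real"
  assumes deriv: "\<And>t. t > t\<^sub>0 \<Longrightarrow> (L has_real_derivative L' t) (at t)"
    and decreasing: "\<And>t. t > t\<^sub>0 \<Longrightarrow> a < L t \<Longrightarrow> L' t < 0"
    and "t\<^sub>0 < T" "L T \<le> a" "T \<le> t"
  shows "L t \<le> a"
proof (rule ccontr)
  assume "\<not> L t \<le> a"
  \<comment> \<open>after the last time \<open>t'\<close> in \<open>[T, t]\<close> at which \<open>L \<le> a\<close>, \<open>L\<close> decreases, so \<open>L t \<le> L t'\<close>\<close>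
  define S where "S = {T..t} \<inter> L -` {..a}"
  have "continuous_on {T..t} L"
    using \<open>t\<^sub>0 < T\<close> by (intro continuous_at_imp_continuous_on ballI DERIV_isCont[OF deriv]) auto
  then have "closed S"
    unfolding S_def by (intro continuous_closed_preimage) auto
  moreover have "T \<in> S" "bdd_above S"
    using assms(4,5) by (auto simp: S_def)
  ultimately have "Sup S \<in> S"
    using closed_contains_Sup by blast
  then have t': "T \<le> Sup S" "Sup S < t" "L (Sup S) \<le> a"
    using \<open>\<not> L t \<le> a\<close> by (auto simp: S_def less_le)
  then obtain z where z: "Sup S < z" "z < t" "L t - L (Sup S) = (t - Sup S) * L' z"
    using MVT2[of "Sup S" t L L'] deriv \<open>t\<^sub>0 < T\<close> by force
  have "z \<notin> S"
    using z(1) \<open>bdd_above S\<close> cSup_upper by fastforce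
  then have "a < L z"
    using z t' by (auto simp: S_def)
  then have "L' z < 0"
    using decreasing z t' \<open>t\<^sub>0 < T\<close> by force
  then have "(t - Sup S) * L' z < 0"
    using z by (intro mult_pos_neg) auto
  then have "L t < L (Sup S)"
    using z(3) by linarith
  with t' \<open>\<not> L t \<le> a\<close> show False
    by simp
qed

lemma eventually_sublevel_of_deriv_le_neg:
  fixes L L' :: "real \<Rightarrow> real"
  assumes deriv: "\<And>t. t > t\<^sub>0 \<Longrightarrow> (L has_real_derivative L' t) (at t)"
    and below: "\<And>t. t > t\<^sub>0 \<Longrightarrow> b \<le> L t"
    and decay: "\<And>t. t > t\<^sub>0 \<Longrightarrow> a < L t \<Longrightarrow> L' t \<le> - \<delta>" and "\<delta> > 0"
  shows "eventually (\<lambda>t. L t \<le> a) at_top"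
proof -
  obtain T where "T > t\<^sub>0" "L T \<le> a"
    using deriv_le_neg_reaches_sublevel[OF deriv below decay \<open>\<delta> > 0\<close>] by blast
  moreover have "\<And>t. t > t\<^sub>0 \<Longrightarrow> a < L t \<Longrightarrow> L' t < 0"
    using decay \<open>\<delta> > 0\<close> by force
  ultimately show ?thesis
    unfolding eventually_at_top_linorder using deriv_neg_sublevel_invariant[OF deriv] by blast
qed

lemma less_mult_powr_of_root_less:
  fixes B c s \<rho> :: real
  assumes "B \<ge> 0" "c > 0" "s > 0" and root: "(B / c) powr (1 / s) < \<rho>"
  shows "B < c * \<rho> powr s"
proof -
  have "B / c = ((B / c) powr (1 / s)) powr s"
    using assms(1-3) by (simp add: powr_powr)
  also have "\<dots> < \<rho> powr s"
    using root \<open>s > 0\<close> by (intro powr_less_mono2) auto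
  finally show ?thesis
    using \<open>c > 0\<close> by (simp add: pos_divide_less_eq mult.commute)
qed

lemma Limsup_le_of_eventually_norm_le:
  fixes x :: "'a \<Rightarrow> 'b::real_normed_vector" and g :: "'a \<Rightarrow> real"
  assumes g: "\<And>t. g t \<le> C * norm (x t) powr r" and "C > 0" "r > 0" "\<rho>\<^sub>0 \<ge> 0"
    and bounded: "\<And>\<rho>. \<rho> > \<rho>\<^sub>0 \<Longrightarrow> eventually (\<lambda>t. norm (x t) \<le> \<rho>) F"
  shows "Limsup F (\<lambda>t. ereal (g t)) \<le> ereal (C * \<rho>\<^sub>0 powr r)"
proof (rule ereal_le_epsilon2)
  fix \<eta> :: real
  assume "\<eta> > 0"
  define \<rho> where "\<rho> = ((C * \<rho>\<^sub>0 powr r + \<eta>) / C) powr (1 / r)"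
  have C\<rho>: "C * \<rho> powr r = C * \<rho>\<^sub>0 powr r + \<eta>"
    using \<open>C > 0\<close> \<open>r > 0\<close> \<open>\<eta> > 0\<close> by (simp add: \<rho>_def powr_powr add_nonneg_pos)
  have "\<rho> > \<rho>\<^sub>0"
  proof (rule ccontr)
    assume "\<not> \<rho> > \<rho>\<^sub>0"
    then have "\<rho> powr r \<le> \<rho>\<^sub>0 powr r"
      using \<open>r > 0\<close> by (intro powr_mono2) (auto simp: \<rho>_def)
    then have "C * \<rho> powr r \<le> C * \<rho>\<^sub>0 powr r"
      using \<open>C > 0\<close> by simp
    with C\<rho> \<open>\<eta> > 0\<close> show False
      by linarith
  qed
  have "eventually (\<lambda>t. g t \<le> C * \<rho>\<^sub>0 powr r + \<eta>) F"
    using bounded[OF \<open>\<rho> > \<rho>\<^sub>0\<close>]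
  proof eventually_elim
    case (elim t)
    then have "C * norm (x t) powr r \<le> C * \<rho> powr r"
      using \<open>C > 0\<close> \<open>r > 0\<close> by (intro mult_left_mono powr_mono2) auto
    with g[of t] C\<rho> show ?case
      by linarith
  qed
  then show "Limsup F (\<lambda>t. ereal (g t)) \<le> ereal (C * \<rho>\<^sub>0 powr r) + ereal \<eta>"
    by (intro Limsup_bounded) (auto elim: eventually_mono)
qed

lemma homogeneous_flow_sq_norm_has_derivative:
  fixes \<theta> :: "real \<Rightarrow> real^'d" and V :: "real^'d \<Rightarrow> real^'n"
  assumes hom: "homogeneous_with h V J" and "h \<noteq> 0" "t > 0"
    and ode: "(\<theta> has_vector_derivative - (transpose (J (\<theta> t)) *v w)) (at t within {0..})"
  shows "((\<lambda>t. (norm (\<theta> t))\<^sup>2) has_real_derivative - (2 / h) * (V (\<theta> t) \<bullet> w)) (at t)"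
proof -
  define F where "F = - (transpose (J (\<theta> t)) *v w)"
  have "at t within {0..} = at t"
    using \<open>t > 0\<close> by (intro at_within_interior) simp
  with ode have "(\<theta> has_derivative (\<lambda>u. u *\<^sub>R F)) (at t)"
    by (simp add: F_def has_vector_derivative_def)
  then have "((\<lambda>t. \<theta> t \<bullet> \<theta> t) has_derivative (\<lambda>u. \<theta> t \<bullet> (u *\<^sub>R F) + (u *\<^sub>R F) \<bullet> \<theta> t)) (at t)"
    using has_derivative_inner by blast
  moreover have "J (\<theta> t) *v \<theta> t = (1 / h) *\<^sub>R V (\<theta> t)"
    using hom \<open>h \<noteq> 0\<close> by (simp add: homogeneous_with_def)
  then have "\<theta> t \<bullet> F = - (1 / h) * (V (\<theta> t) \<bullet> w)"
    by (simp add: F_def dot_lmul_matrix inner_commute[of "\<theta> t"] inner_commute[of w])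
  then have "(\<lambda>u. \<theta> t \<bullet> (u *\<^sub>R F) + (u *\<^sub>R F) \<bullet> \<theta> t) = (*) (- (2 / h) * (V (\<theta> t) \<bullet> w))"
    by (auto simp: inner_commute[of F])
  ultimately show ?thesis
    by (simp add: has_field_derivative_def power2_norm_eq_inner)
qed

lemma td_flow_eventually_norm_le:
  fixes \<theta> :: "real \<Rightarrow> real^'d" and V :: "real^'d \<Rightarrow> real^'n"
  assumes P: "stochastic P" and \<mu>: "stationary_distribution P \<mu>" and "0 \<le> \<gamma>" "\<gamma> < 1"
    and Vstar: "Vstar = R + \<gamma> *\<^sub>R (P *v Vstar)"
    and hom: "homogeneous_with h V J" and "h > 0" "c \<ge> 0" "s \<ge> 0"
    and lower: "\<And>x. c * norm x powr s \<le> mu_norm \<mu> (V x)"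
    and ode: "\<And>t. t \<ge> 0 \<Longrightarrow>
       (\<theta> has_vector_derivative
          (- (transpose (J (\<theta> t)) *v (A_mat \<mu> \<gamma> P *v (V (\<theta> t) - Vstar)))))
       (at t within {0..})"
    and "\<rho> > 0" and radius: "mu_norm \<mu> R / (1 - \<gamma>) < c * \<rho> powr s"
  shows "eventually (\<lambda>t. norm (\<theta> t) \<le> \<rho>) at_top"
proof -
  define B \<beta> where "B = mu_norm \<mu> R / (1 - \<gamma>)" and "\<beta> = c * \<rho> powr s"
  define \<delta> where "\<delta> = 2 / h * ((1 - \<gamma>) * (\<beta> * (\<beta> - B)))"
  define L' where "L' t = - (2 / h) * (V (\<theta> t) \<bullet> (A_mat \<mu> \<gamma> P *v (V (\<theta> t) - Vstar)))" for t
  have \<mu>_nonneg: "\<And>i. \<mu>$i \<ge> 0"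
    using \<mu> by (simp add: stationary_distribution_def)
  have "B \<ge> 0"
    using mu_norm_nonneg[OF \<mu>_nonneg] \<open>\<gamma> < 1\<close> by (simp add: B_def)
  with radius have "B < \<beta>"
    by (simp add: B_def \<beta>_def)
  have "\<delta> > 0"
    using \<open>h > 0\<close> \<open>\<gamma> < 1\<close> \<open>B \<ge> 0\<close> \<open>B < \<beta>\<close> by (simp add: \<delta>_def)
  have deriv: "((\<lambda>t. (norm (\<theta> t))\<^sup>2) has_real_derivative L' t) (at t)" if "t > 0" for t
    unfolding L'_def using \<open>h > 0\<close> that ode
    by (intro homogeneous_flow_sq_norm_has_derivative[OF hom]) auto
  have decay: "L' t \<le> - \<delta>" if "\<rho>\<^sup>2 < (norm (\<theta> t))\<^sup>2" for t
  proof -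
    define m where "m = mu_norm \<mu> (V (\<theta> t))"
    have "\<rho> \<le> norm (\<theta> t)"
      using that power_less_imp_less_base[of \<rho> 2 "norm (\<theta> t)"] by simp
    then have "\<beta> \<le> c * norm (\<theta> t) powr s"
      unfolding \<beta>_def using \<open>\<rho> > 0\<close> \<open>c \<ge> 0\<close> \<open>s \<ge> 0\<close> by (intro mult_left_mono powr_mono2) auto
    also have "\<dots> \<le> m"
      unfolding m_def by (rule lower)
    finally have "\<beta> \<le> m" .
    have "(1 - \<gamma>) * (\<beta> * (\<beta> - B)) \<le> (1 - \<gamma>) * (m * (m - B))"
      using \<open>\<beta> \<le> m\<close> \<open>B < \<beta>\<close> \<open>B \<ge> 0\<close> \<open>\<gamma> < 1\<close> by (intro mult_left_mono mult_mono) auto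
    also have "\<dots> = (1 - \<gamma>) * m\<^sup>2 - m * mu_norm \<mu> R"
      using \<open>\<gamma> < 1\<close> by (simp add: B_def power2_eq_square field_simps)
    also have "\<dots> \<le> V (\<theta> t) \<bullet> (A_mat \<mu> \<gamma> P *v (V (\<theta> t) - Vstar))"
      unfolding m_def by (rule inner_A_mat_ge[OF P \<mu> \<open>0 \<le> \<gamma>\<close> Vstar])
    finally have "2 / h * ((1 - \<gamma>) * (\<beta> * (\<beta> - B)))
        \<le> 2 / h * (V (\<theta> t) \<bullet> (A_mat \<mu> \<gamma> P *v (V (\<theta> t) - Vstar)))"
      using \<open>h > 0\<close> by (intro mult_left_mono) auto
    then show ?thesis
      by (simp add: L'_def \<delta>_def)
  qed
  have "eventually (\<lambda>t. (norm (\<theta> t))\<^sup>2 \<le> \<rho>\<^sup>2) at_top"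
    by (rule eventually_sublevel_of_deriv_le_neg[where t\<^sub>0 = 0 and b = 0 and L' = L' and \<delta> = \<delta>])
      (use deriv decay \<open>\<delta> > 0\<close> in auto)
  then show ?thesis
    by eventually_elim (use \<open>\<rho> > 0\<close> power2_le_imp_le in auto)
qed

theorem mainTheorem2:
  fixes P :: "real^'n^'n" and \<mu> :: "real^'n" and r :: "'n \<Rightarrow> 'n \<Rightarrow> real"
    and \<gamma> :: real and Vstar :: "real^'n"
    and V :: "real^'d \<Rightarrow> real^'n" and J :: "real^'d \<Rightarrow> real^'d^'n"
    and h c s r' C :: real
    and \<theta> :: "real \<Rightarrow> real^'d" and \<theta>0 :: "real^'d"
  assumes P_stoch: "stochastic P"
    and P_irr: "irreducible_chain P"
    and P_aper: "aperiodic_chain P"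
    and mu_stat: "stationary_distribution P \<mu>"
    and gamma: "0 \<le> \<gamma>" "\<gamma> < 1"
    and Vstar: "Vstar = exp_reward P r + \<gamma> *\<^sub>R (P *v Vstar)"
    and V_deriv: "\<And>x. (V has_derivative (\<lambda>v. J x *v v)) (at x)"
    and J_cont: "continuous_on UNIV J"
    and V_hom: "homogeneous_with h V J"
    and pos: "c > 0" "s > 0" "r' > 0" "C > 0"
    and bounds: "\<And>x. c * norm x powr s \<le> mu_norm \<mu> (V x)"
                "\<And>x. mu_norm \<mu> (V x) \<le> C * norm x powr r'"
    and init: "\<theta> 0 = \<theta>0"
    and ode: "\<And>t. t \<ge> 0 \<Longrightarrow>
       (\<theta> has_vector_derivative
          (- (transpose (J (\<theta> t)) *v (A_mat \<mu> \<gamma> P *v (V (\<theta> t) - Vstar)))))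
       (at t within {0..})"
  shows "Limsup at_top (\<lambda>t. ereal (mu_norm \<mu> (V (\<theta> t))))
           \<le> ereal (C * ((mu_norm \<mu> (exp_reward P r) / (1 - \<gamma>)) / c) powr (r' / s))"
proof -
  \<comment> \<open>of the Markov chain only the stationarity of \<open>\<mu>\<close> is used; irreducibility, aperiodicity,
     continuity of \<open>J\<close> and the initial value play no role\<close>
  have \<mu>_nonneg: "\<And>i. \<mu>$i \<ge> 0"
    using mu_stat by (simp add: stationary_distribution_def)
  have "h > 0"
    by (rule homogeneous_degree_pos[OF V_deriv V_hom pos(1,2) bounds(1)])
  define B where "B = mu_norm \<mu> (exp_reward P r) / (1 - \<gamma>)"
  have "B \<ge> 0"
    using mu_norm_nonneg[OF \<mu>_nonneg] gamma by (simp add: B_def)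
  have "eventually (\<lambda>t. norm (\<theta> t) \<le> \<rho>) at_top" if \<rho>: "\<rho> > (B / c) powr (1 / s)" for \<rho>
  proof (rule td_flow_eventually_norm_le[OF P_stoch mu_stat gamma Vstar V_hom \<open>h > 0\<close> _ _ bounds(1) ode])
    show "\<rho> > 0"
      using \<rho> powr_ge_zero[of "B / c" "1 / s"] by linarith
    show "mu_norm \<mu> (exp_reward P r) / (1 - \<gamma>) < c * \<rho> powr s"
      using less_mult_powr_of_root_less[OF \<open>B \<ge> 0\<close> pos(1,2) \<rho>] by (simp add: B_def)
  qed (use pos in auto)
  then have "Limsup at_top (\<lambda>t. ereal (mu_norm \<mu> (V (\<theta> t)))) \<le> ereal (C * ((B / c) powr (1 / s)) powr r')"
    by (intro Limsup_le_of_eventually_norm_le[OF bounds(2) pos(4,3)]) auto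
  then show ?thesis
    by (simp add: B_def powr_powr)
qed

end
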